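(* Let $r\ge1$ be an integer and for $i=0,1,\dots,2r$ let $$G_{i,r}=\big((2r+1)K_1\big)\nabla\Big(\big((2r+1-i)K_1\big)\cup\big(K_1\nabla(i+1)K_1\big)\Big),$$ each of order $4r+4$. Then for every $i$, $LE(G_{i,r})=LE(K_{4r+4})=8r+6$ (so each $G_{i,r}$ is $L$-borderenergetic), and the $2r+1$ graphs $G_{0,r},\dots,G_{2r,r}$ have pairwise distinct Laplacian spectra, none equal to the Laplacian spectrum of $K_{4r+4}$.
   Context: All graphs are finite, simple and undirected. The Laplacian matrix of $G$ is $L(G)=D-A$ ($D$ degree matrix, $A$ adjacency matrix). For a graph $G$ on $n$ vertices with Laplacian eigenvalues $\mu_1,\dots,\mu_n$ and average degree $\overline d = 2|E(G)|/n$, the Laplacian energy is $LE(G)=\sum_{i=1}^n|\mu_i-\overline d|$. One has $LE(K_n)=2n-2$. A graph $G$ on $n$ vertices is $L$-borderenergetic if $LE(G)=LE(K_n)$. $K_m$ is the complete graph on $m$ vertices, $mG$ is the disjoint union of $m$ copies of $G$ ($0K_1$ is the empty graph), $\cup$ is disjoint union, and the join $G_1\nabla G_2$ is obtained from $G_1\cup G_2$ by adding all edges between a vertex of $G_1$ and a vertex of $G_2$. *)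

theory Defs
  imports "Jordan_Normal_Form.Char_Poly"
begin

text \<open>A finite simple graph is represented as a pair (n, adj): the vertex set is {0..<n}
  and adj is the (symmetric, irreflexive) adjacency relation, only relevant on {0..<n}.\<close>

type_synonym graph = "nat \<times> (nat \<Rightarrow> nat \<Rightarrow> bool)"

definition order :: "graph \<Rightarrow> nat" where
  "order G = fst G"

definition adj :: "graph \<Rightarrow> nat \<Rightarrow> nat \<Rightarrow> bool" where
  "adj G = snd G"

definition empty_graph :: "nat \<Rightarrow> graph" where
  "empty_graph m = (m, (\<lambda>_ _. False))"

definition complete_graph :: "nat \<Rightarrow> graph" where
  "complete_graph m = (m, (\<lambda>i j. i \<noteq> j))"

definition gunion :: "graph \<Rightarrow> graph \<Rightarrow> graph" where
  "gunion G1 G2 = (order G1 + order G2,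
     (\<lambda>i j. if i < order G1 \<and> j < order G1 then adj G1 i j
            else if order G1 \<le> i \<and> order G1 \<le> j then adj G2 (i - order G1) (j - order G1)
            else False))"

definition gjoin :: "graph \<Rightarrow> graph \<Rightarrow> graph" where
  "gjoin G1 G2 = (order G1 + order G2,
     (\<lambda>i j. if i < order G1 \<and> j < order G1 then adj G1 i j
            else if order G1 \<le> i \<and> order G1 \<le> j then adj G2 (i - order G1) (j - order G1)
            else True))"

definition degree :: "graph \<Rightarrow> nat \<Rightarrow> nat" where
  "degree G i = card {k. k < order G \<and> adj G i k}"

definition num_edges :: "graph \<Rightarrow> nat" where
  "num_edges G = card {(i, j). i < j \<and> j < order G \<and> adj G i j}"

definition laplacian :: "graph \<Rightarrow> real mat" where
  "laplacian G = mat (order G) (order G)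
     (\<lambda>(i, j). (if i = j then real (degree G i) else 0) - (if adj G i j then 1 else 0))"

text \<open>Laplacian spectrum: multiset of eigenvalues (roots of the characteristic polynomial,
  with multiplicity; the Laplacian is real symmetric so all eigenvalues are real).\<close>
definition lap_spectrum :: "graph \<Rightarrow> real multiset" where
  "lap_spectrum G = proots (char_poly (laplacian G))"

definition avg_degree :: "graph \<Rightarrow> real" where
  "avg_degree G = 2 * real (num_edges G) / real (order G)"

definition lap_energy :: "graph \<Rightarrow> real" where
  "lap_energy G = (\<Sum>\<^sub># (image_mset (\<lambda>\<mu>. \<bar>\<mu> - avg_degree G\<bar>) (lap_spectrum G)))"

definition L_borderenergetic :: "graph \<Rightarrow> bool" where
  "L_borderenergetic G \<longleftrightarrow> lap_energy G = lap_energy (complete_graph (order G))"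

definition G_ir :: "nat \<Rightarrow> nat \<Rightarrow> graph" where
  "G_ir i r = gjoin (empty_graph (2*r+1))
      (gunion (empty_graph (2*r+1-i)) (gjoin (empty_graph 1) (empty_graph (i+1))))"

end

theory Submission
  imports Defs
begin

text \<open>Both \<open>K n\<close> and \<open>G_ir i r\<close> are blow-ups of a small pattern graph: the vertices are split
  into blocks, each block is an independent set or a clique, and two distinct blocks are either
  completely joined or not joined at all. For each block \<open>S\<close>, let \<open>d S\<close> be the sum of the sizes of
  the blocks joined to \<open>S\<close> (counting \<open>S\<close> itself when it is a clique). Every vector supported on \<open>S\<close>
  with sum zero is then a Laplacian eigenvector for \<open>d S\<close>, which gives \<open>|S| - 1\<close> eigenvalues per
  block; the remaining eigenvalues are those of the quotient matrix on the blocks.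
  For \<open>G_ir i r\<close> the blocks have sizes \<open>2r+1, 2r+1-i, 1, i+1\<close>, and the Laplacian spectrum is
  \<open>0, 4r+4, 2r+3+i, 2r+1\<close> together with \<open>2r+3, 2r+1, 2r+2\<close> of multiplicities \<open>2r, 2r-i, i\<close>.
  The average degree \<open>2r+2+i/(2r+2)\<close> lies between \<open>2r+2\<close> and \<open>2r+3\<close>, and summing the distances
  to it gives \<open>8r+6\<close>. The multiplicity \<open>i\<close> of \<open>2r+2\<close> tells the spectra apart, and \<open>4r+4\<close> is a
  simple eigenvalue of \<open>G_ir i r\<close> but has multiplicity \<open>4r+3\<close> for the complete graph.\<close>

lemma index_mat_mult_mat:
  assumes "i < n" "j < n"
  shows "(mat n n f * mat n n g) $$ (i, j) = (\<Sum>k<n. f (i, k) * g (k, j))"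
  using assms by (simp add: scalar_prod_def atLeast0LessThan)

lemma sum_mult_indicator_diff:
  fixes f :: "nat \<Rightarrow> real"
  assumes "a < n" "b < n"
  shows "(\<Sum>k<n. f k * ((if k = a then 1 else 0) - (if k = b then 1 else 0))) = f a - f b"
proof -
  have "(\<Sum>k<n. f k * ((if k = a then 1 else 0) - (if k = b then 1 else 0)))
      = (\<Sum>k<n. (if k = a then f k else 0) - (if k = b then f k else 0))"
    by (rule sum.cong) auto
  also have "\<dots> = f a - f b" using assms by (simp add: sum_subtractf)
  finally show ?thesis .
qed

lemma real_card_filter_lessThan:
  "real (card {k. k < (n :: nat) \<and> P k}) = (\<Sum>k<n. if P k then 1 else 0)"
proof -
  have "(\<Sum>k<n. if P k then (1::real) else 0) = (\<Sum>k\<in>{k. k < n \<and> P k}. 1)"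
    by (rule sum.mono_neutral_cong_right) auto
  then show ?thesis by simp
qed

lemma proots_prod_list_linear_factors:
  "proots (\<Prod>a\<leftarrow>xs. [:- a, 1:]) = mset (xs :: 'a :: idom list)"
proof (induction xs)
  case (Cons a xs)
  have "proots ([:- a, 1:] * (\<Prod>a\<leftarrow>xs. [:- a, 1:])) = proots [:- a, 1:] + proots (\<Prod>a\<leftarrow>xs. [:- a, 1:])"
    by (rule proots_mult) (auto simp: prod_list_zero_iff)
  then show ?case using Cons by simp
qed simp

lemma count_eq_sum_mset_indicator:
  "real (count M v) = (\<Sum>\<^sub># (image_mset (\<lambda>x. if x = v then 1 else 0) M))"
  by (induction M) auto

lemma two_num_edges_eq_sum_degree:
  assumes sym: "\<And>u v. u < order G \<Longrightarrow> v < order G \<Longrightarrow> adj G u v = adj G v u"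
    and irrefl: "\<And>u. u < order G \<Longrightarrow> \<not> adj G u u"
  shows "2 * num_edges G = (\<Sum>u<order G. degree G u)"
proof -
  let ?n = "order G"
  define E where "E = {(i, j). i < j \<and> j < ?n \<and> adj G i j}"
  define E2 where "E2 = {(u, k). u < ?n \<and> k < ?n \<and> adj G u k}"
  have "finite E" unfolding E_def
    by (rule finite_subset[of _ "{..<?n} \<times> {..<?n}"]) auto
  have "E2 = E \<union> prod.swap ` E"
  proof
    show "E2 \<subseteq> E \<union> prod.swap ` E"
    proof
      fix x assume "x \<in> E2"
      then obtain u k where x: "x = (u, k)" "u < ?n" "k < ?n" "adj G u k" unfolding E2_def by auto
      then have "u \<noteq> k" using irrefl by auto
      then show "x \<in> E \<union> prod.swap ` E"
        using x sym[of u k] unfolding E_def by (cases "u < k") (auto intro: image_eqI[of _ _ "(k, u)"])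
    qed
    show "E \<union> prod.swap ` E \<subseteq> E2" unfolding E_def E2_def using sym by auto
  qed
  moreover have "E \<inter> prod.swap ` E = {}" unfolding E_def by auto
  ultimately have "card E2 = card E + card (prod.swap ` E)"
    using \<open>finite E\<close> by (simp add: card_Un_disjoint)
  then have "card E2 = 2 * card E" by (simp add: card_image)
  moreover have "E2 = Sigma {..<?n} (\<lambda>u. {k. k < ?n \<and> adj G u k})" unfolding E2_def by auto
  then have "card E2 = (\<Sum>u<?n. card {k. k < ?n \<and> adj G u k})" by (simp add: card_SigmaI)
  ultimately show ?thesis by (simp add: num_edges_def E_def degree_def)
qed

lemma avg_degree_eq_sum_degree:
  assumes "\<And>u v. u < order G \<Longrightarrow> v < order G \<Longrightarrow> adj G u v = adj G v u"
    and "\<And>u. u < order G \<Longrightarrow> \<not> adj G u u"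
  shows "avg_degree G = (\<Sum>u<order G. real (degree G u)) / real (order G)"
proof -
  have "real (2 * num_edges G) = real (\<Sum>u<order G. degree G u)"
    using two_num_edges_eq_sum_degree[OF assms] by metis
  then show ?thesis unfolding avg_degree_def by simp
qed

definition block_size :: "nat \<Rightarrow> (nat \<Rightarrow> nat) \<Rightarrow> nat \<Rightarrow> real" where
  "block_size n blk S = real (card {k. k < n \<and> blk k = S})"

definition block_degree :: "nat \<Rightarrow> nat \<Rightarrow> (nat \<Rightarrow> nat) \<Rightarrow> (nat \<Rightarrow> nat \<Rightarrow> bool) \<Rightarrow> nat \<Rightarrow> real" where
  "block_degree n m blk pat S = (\<Sum>T<m. block_size n blk T * (if pat S T then 1 else 0))"

lemma sum_lessThan_by_block:
  assumes "\<And>k. k < n \<Longrightarrow> blk k < m"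
  shows "(\<Sum>k<n. F (blk k)) = (\<Sum>S<m. block_size n blk S * F S)"
proof -
  have "(\<Sum>S<m. block_size n blk S * F S) = (\<Sum>S<m. \<Sum>k<n. if blk k = S then F S else 0)"
  proof (rule sum.cong[OF refl])
    fix S
    have "(\<Sum>k<n. if blk k = S then F S else 0) = (\<Sum>k\<in>{k. k < n \<and> blk k = S}. F S)"
      by (rule sum.mono_neutral_cong_right) auto
    then show "block_size n blk S * F S = (\<Sum>k<n. if blk k = S then F S else 0)"
      by (simp add: block_size_def)
  qed
  also have "\<dots> = (\<Sum>k<n. \<Sum>S<m. if blk k = S then F S else 0)" by (rule sum.swap)
  also have "\<dots> = (\<Sum>k<n. F (blk k))"
    by (rule sum.cong[OF refl]) (use assms in \<open>simp add: eq_commute[of "blk _"]\<close>)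
  finally show ?thesis by simp
qed

locale block_graph =
  fixes G :: graph and m :: nat and blk rep :: "nat \<Rightarrow> nat" and pat :: "nat \<Rightarrow> nat \<Rightarrow> bool"
  assumes block_less: "k < order G \<Longrightarrow> blk k < m"
    and rep_less: "S < m \<Longrightarrow> rep S < order G"
    and block_rep: "S < m \<Longrightarrow> blk (rep S) = S"
    and pat_sym: "S < m \<Longrightarrow> T < m \<Longrightarrow> pat S T = pat T S"
    and adj_iff: "u < order G \<Longrightarrow> v < order G \<Longrightarrow> adj G u v \<longleftrightarrow> u \<noteq> v \<and> pat (blk u) (blk v)"
begin

abbreviation "n \<equiv> order G"
abbreviation "bsize \<equiv> block_size n blk"
abbreviation "bdeg \<equiv> block_degree n m blk pat"

lemma sum_by_block: "(\<Sum>k<n. F (blk k)) = (\<Sum>S<m. bsize S * F S)"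
  by (rule sum_lessThan_by_block) (rule block_less)

lemma block_size_pos: "S < m \<Longrightarrow> bsize S > 0"
proof -
  assume S: "S < m"
  have "rep S \<in> {k. k < n \<and> blk k = S}" using rep_less[OF S] block_rep[OF S] by auto
  then have "card {k. k < n \<and> blk k = S} > 0" by (subst card_gt_0_iff) auto
  then show ?thesis by (simp add: block_size_def)
qed

lemma degree_eq:
  assumes u: "u < n"
  shows "real (degree G u) = bdeg (blk u) - (if pat (blk u) (blk u) then 1 else 0)"
proof -
  let ?S = "blk u"
  have "{k. k < n \<and> adj G u k} = {k. k < n \<and> k \<noteq> u \<and> pat ?S (blk k)}"
    using adj_iff u by auto
  then have "real (degree G u) = (\<Sum>k<n. if k \<noteq> u \<and> pat ?S (blk k) then 1 else 0)"
    by (simp add: degree_def real_card_filter_lessThan)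
  also have "\<dots> = (\<Sum>k<n. (if pat ?S (blk k) then 1 else 0) - (if k = u \<and> pat ?S ?S then 1 else 0))"
    by (rule sum.cong) auto
  also have "\<dots> = (\<Sum>k<n. (\<lambda>T. if pat ?S T then 1 else 0) (blk k)) - (if pat ?S ?S then 1 else 0)"
    using u by (simp add: sum_subtractf)
  also have "(\<Sum>k<n. (\<lambda>T. if pat ?S T then 1 else 0) (blk k)) = bdeg ?S"
    unfolding block_degree_def by (rule sum_by_block)
  finally show ?thesis .
qed

lemma avg_degree_by_block:
  "avg_degree G = (\<Sum>S<m. bsize S * (bdeg S - (if pat S S then 1 else 0))) / real n"
proof -
  have "avg_degree G = (\<Sum>u<n. real (degree G u)) / real n"
    by (rule avg_degree_eq_sum_degree) (use adj_iff pat_sym block_less in auto)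
  also have "(\<Sum>u<n. real (degree G u)) = (\<Sum>u<n. (\<lambda>S. bdeg S - (if pat S S then 1 else 0)) (blk u))"
    by (rule sum.cong) (simp_all add: degree_eq)
  also have "\<dots> = (\<Sum>S<m. bsize S * (bdeg S - (if pat S S then 1 else 0)))"
    by (rule sum_by_block)
  finally show ?thesis .
qed

definition laplacian_entry :: "nat \<times> nat \<Rightarrow> real" where
  "laplacian_entry = (\<lambda>(i, j). (if i = j then real (degree G i) else 0) - (if adj G i j then 1 else 0))"

lemma laplacian_eq_mat: "laplacian G = mat n n laplacian_entry"
  by (simp add: laplacian_def laplacian_entry_def)

lemma laplacian_row_sum:
  assumes u: "u < n"
  shows "(\<Sum>k<n. laplacian_entry (u, k) * x k)
    = bdeg (blk u) * x u - (\<Sum>k<n. (if pat (blk u) (blk k) then 1 else 0) * x k)"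
proof -
  let ?S = "blk u"
  have "(\<Sum>k<n. laplacian_entry (u, k) * x k) = (\<Sum>k<n. (if k = u then real (degree G u) * x u else 0)
     - ((if pat ?S (blk k) then 1 else 0) * x k - (if k = u \<and> pat ?S ?S then x u else 0)))"
    by (rule sum.cong) (use u adj_iff in \<open>auto simp: laplacian_entry_def\<close>)
  also have "\<dots> = real (degree G u) * x u
      - ((\<Sum>k<n. (if pat ?S (blk k) then 1 else 0) * x k) - (if pat ?S ?S then x u else 0))"
    using u by (simp add: sum_subtractf)
  finally show ?thesis using degree_eq[OF u] by (cases "pat ?S ?S") (simp_all add: algebra_simps)
qed

end

text \<open>The vectors \<open>w R\<close>, \<open>R < m\<close>, form an eigenbasis of the quotient Laplacian
  \<open>v \<mapsto> (\<lambda>S. d S * v S - \<Sum>T joined to S. |T| * v T)\<close>, orthogonal for the inner product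
  weighted by the block sizes (for which the quotient Laplacian is self-adjoint).\<close>

locale block_graph_eigenbasis = block_graph +
  fixes w :: "nat \<Rightarrow> nat \<Rightarrow> real" and lam sqnorm :: "nat \<Rightarrow> real"
  assumes eigvec_orth: "R < m \<Longrightarrow> C < m \<Longrightarrow>
      (\<Sum>S<m. bsize S * (w R S * w C S)) = (if R = C then sqnorm R else 0)"
    and sqnorm_nonzero: "R < m \<Longrightarrow> sqnorm R \<noteq> 0"
    and eigvec_eq: "R < m \<Longrightarrow> S < m \<Longrightarrow>
      bdeg S * w R S - (\<Sum>T<m. bsize T * (if pat S T then w R T else 0)) = lam R * w R S"
begin

text \<open>Column \<open>j\<close> of \<open>P\<close> is the lifted quotient eigenvector \<open>w (blk j) \<circ> blk\<close> if \<open>j\<close> represents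
  its block, and \<open>e j - e (rep (blk j))\<close> otherwise; \<open>Q\<close> is its inverse, read off from the
  orthogonality of the \<open>w R\<close>.\<close>

definition P_entry :: "nat \<times> nat \<Rightarrow> real" where
  "P_entry = (\<lambda>(k, j). if j = rep (blk j) then w (blk j) (blk k)
      else (if k = j then 1 else 0) - (if k = rep (blk j) then 1 else 0))"

definition Q_entry :: "nat \<times> nat \<Rightarrow> real" where
  "Q_entry = (\<lambda>(j, k). if j = rep (blk j) then w (blk j) (blk k) / sqnorm (blk j)
      else (if k = j then 1 else 0) - (if blk k = blk j then 1 / bsize (blk j) else 0))"

definition eigval :: "nat \<Rightarrow> real" where
  "eigval j = (if j = rep (blk j) then lam (blk j) else bdeg (blk j))"

lemma Q_mult_P:
  assumes row: "i < n" and col: "j < n"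
  shows "(\<Sum>k<n. Q_entry (i, k) * P_entry (k, j)) = (if i = j then 1 else 0)"
proof (cases "j = rep (blk j)")
  case False
  let ?T = "blk j"
  have T: "?T < m" using block_less col by auto
  have "(\<Sum>k<n. Q_entry (i, k) * P_entry (k, j))
      = (\<Sum>k<n. Q_entry (i, k) * ((if k = j then 1 else 0) - (if k = rep ?T then 1 else 0)))"
    by (rule sum.cong) (use False in \<open>auto simp: P_entry_def\<close>)
  also have "\<dots> = Q_entry (i, j) - Q_entry (i, rep ?T)"
    by (rule sum_mult_indicator_diff) (use col rep_less T in auto)
  also have "\<dots> = (if i = j then 1 else 0)"
    using False block_rep[OF T] by (cases "i = rep (blk i)") (auto simp: Q_entry_def)
  finally show ?thesis .
next
  case True
  let ?C = "blk j"
  have C: "?C < m" using block_less col by auto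
  have "(\<Sum>k<n. Q_entry (i, k) * P_entry (k, j)) = (\<Sum>k<n. Q_entry (i, k) * w ?C (blk k))"
    by (rule sum.cong) (use True in \<open>auto simp: P_entry_def\<close>)
  also have "\<dots> = (if i = j then 1 else 0)"
  proof (cases "i = rep (blk i)")
    case i_rep: True
    let ?R = "blk i"
    have R: "?R < m" using block_less row by auto
    have "(\<Sum>k<n. Q_entry (i, k) * w ?C (blk k)) = (\<Sum>k<n. (\<lambda>S. w ?R S / sqnorm ?R * w ?C S) (blk k))"
      by (rule sum.cong) (use i_rep in \<open>auto simp: Q_entry_def\<close>)
    also have "\<dots> = (\<Sum>S<m. bsize S * (w ?R S / sqnorm ?R * w ?C S))"
      by (rule sum_by_block)
    also have "\<dots> = (\<Sum>S<m. bsize S * (w ?R S * w ?C S)) / sqnorm ?R"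
      by (simp add: sum_divide_distrib)
    also have "\<dots> = (if ?R = ?C then 1 else 0)"
      using eigvec_orth[OF R C] sqnorm_nonzero[OF R] by (cases "?R = ?C") auto
    finally show ?thesis using i_rep True by metis
  next
    case i_nonrep: False
    let ?S = "blk i"
    have S: "?S < m" using block_less row by auto
    have "(\<Sum>k<n. Q_entry (i, k) * w ?C (blk k)) = (\<Sum>k<n. (if k = i then w ?C (blk k) else 0) -
          (\<lambda>T. (if T = ?S then 1 / bsize ?S else 0) * w ?C T) (blk k))"
      by (rule sum.cong) (use i_nonrep in \<open>auto simp: Q_entry_def algebra_simps\<close>)
    also have "\<dots> = w ?C ?S - (\<Sum>k<n. (\<lambda>T. (if T = ?S then 1 / bsize ?S else 0) * w ?C T) (blk k))"
      using row by (simp add: sum_subtractf)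
    also have "(\<Sum>k<n. (\<lambda>T. (if T = ?S then 1 / bsize ?S else 0) * w ?C T) (blk k))
        = (\<Sum>T<m. bsize T * ((if T = ?S then 1 / bsize ?S else 0) * w ?C T))"
      by (rule sum_by_block)
    also have "\<dots> = (\<Sum>T<m. if T = ?S then w ?C ?S else 0)"
      by (rule sum.cong) (use block_size_pos[OF S] in auto)
    also have "\<dots> = w ?C ?S" using S by simp
    finally show ?thesis using i_nonrep True by auto
  qed
  finally show ?thesis .
qed

lemma laplacian_mult_P:
  assumes u: "u < n" and j: "j < n"
  shows "(\<Sum>k<n. laplacian_entry (u, k) * P_entry (k, j)) = P_entry (u, j) * eigval j"
proof -
  let ?S = "blk u"
  have S: "?S < m" using block_less u by auto
  have "(\<Sum>k<n. laplacian_entry (u, k) * P_entry (k, j))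
      = bdeg ?S * P_entry (u, j) - (\<Sum>k<n. (if pat ?S (blk k) then 1 else 0) * P_entry (k, j))"
    by (rule laplacian_row_sum[OF u])
  also have "\<dots> = P_entry (u, j) * eigval j"
  proof (cases "j = rep (blk j)")
    case True
    let ?C = "blk j"
    have C: "?C < m" using block_less j by auto
    have "(\<Sum>k<n. (if pat ?S (blk k) then 1 else 0) * P_entry (k, j))
        = (\<Sum>k<n. (\<lambda>T. if pat ?S T then w ?C T else 0) (blk k))"
      by (rule sum.cong) (use True in \<open>auto simp: P_entry_def\<close>)
    also have "\<dots> = (\<Sum>T<m. bsize T * (if pat ?S T then w ?C T else 0))"
      by (rule sum_by_block)
    finally show ?thesis
      using eigvec_eq[OF C S] True by (simp add: P_entry_def eigval_def)
  next
    case False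
    let ?T = "blk j"
    have T: "?T < m" using block_less j by auto
    have "(\<Sum>k<n. (if pat ?S (blk k) then 1 else 0) * P_entry (k, j)) =
       (\<Sum>k<n. (if pat ?S (blk k) then 1 else 0) * ((if k = j then 1 else 0) - (if k = rep ?T then 1 else 0)))"
      by (rule sum.cong) (use False in \<open>auto simp: P_entry_def\<close>)
    also have "\<dots> = 0"
      using sum_mult_indicator_diff[of j n "rep ?T" "\<lambda>k. if pat ?S (blk k) then 1 else 0"]
        j rep_less[OF T] block_rep[OF T] by simp
    finally have "(\<Sum>k<n. (if pat ?S (blk k) then 1 else 0) * P_entry (k, j)) = 0" .
    moreover have "P_entry (u, j) \<noteq> 0 \<Longrightarrow> ?S = ?T"
      using False block_rep[OF T] by (auto simp: P_entry_def split: if_splits)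
    ultimately show ?thesis using False by (cases "P_entry (u, j) = 0") (auto simp: eigval_def)
  qed
  finally show ?thesis .
qed

lemma lap_spectrum_eq: "lap_spectrum G = mset (map eigval [0..<n])"
proof -
  define L where "L = mat n n laplacian_entry"
  define P where "P = mat n n P_entry"
  define Q where "Q = mat n n Q_entry"
  define D where "D = mat n n (\<lambda>(i, j). if i = j then eigval j else 0)"
  have carrier: "L \<in> carrier_mat n n" "P \<in> carrier_mat n n" "Q \<in> carrier_mat n n" "D \<in> carrier_mat n n"
    by (auto simp: L_def P_def Q_def D_def)
  have QP: "Q * P = 1\<^sub>m n"
    by (rule eq_matI) (auto simp: Q_def P_def index_mat_mult_mat Q_mult_P simp del: index_mult_mat(1))
  then have PQ: "P * Q = 1\<^sub>m n" by (rule mat_mult_left_right_inverse[OF carrier(3,2)])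
  have LP: "L * P = P * D"
    by (rule eq_matI)
      (auto simp: L_def P_def D_def index_mat_mult_mat laplacian_mult_P if_distrib cong: if_cong
        simp del: index_mult_mat(1))
  have "L = L * (P * Q)" using carrier PQ by simp
  also have "\<dots> = (L * P) * Q" using carrier by (simp add: assoc_mult_mat)
  also have "\<dots> = P * D * Q" using LP by simp
  finally have "similar_mat L D" by (intro similar_matI[OF _ PQ QP]) (use carrier in auto)
  then have "char_poly L = char_poly D" by (rule char_poly_similar)
  also have "\<dots> = (\<Prod>a\<leftarrow>diag_mat D. [:- a, 1:])"
    by (rule char_poly_upper_triangular[OF carrier(4)]) (auto simp: upper_triangular_def D_def)
  finally have "char_poly L = (\<Prod>a\<leftarrow>diag_mat D. [:- a, 1:])" .
  moreover have "diag_mat D = map eigval [0..<n]"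
    by (rule nth_equalityI) (auto simp: diag_mat_def D_def)
  ultimately show ?thesis
    unfolding lap_spectrum_def laplacian_eq_mat L_def[symmetric]
    by (simp only: proots_prod_list_linear_factors)
qed

lemma sum_mset_lap_spectrum:
  "(\<Sum>\<^sub># (image_mset g (lap_spectrum G))) = (\<Sum>S<m. g (lam S) + (bsize S - 1) * g (bdeg S))"
proof -
  have reps: "{j. j < n \<and> j = rep (blk j)} = rep ` {..<m}"
    using block_less rep_less block_rep by auto
  have "inj_on rep {..<m}" by (rule inj_onI) (metis block_rep lessThan_iff)
  have "mset (map eigval [0..<n]) = image_mset eigval (mset_set {..<n})"
    by (simp add: atLeast0LessThan)
  then have "(\<Sum>\<^sub># (image_mset g (lap_spectrum G))) = (\<Sum>j<n. g (eigval j))"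
    unfolding lap_spectrum_eq by (simp add: image_mset.compositionality sum_unfold_sum_mset o_def)
  also have "\<dots> = (\<Sum>j<n. g (bdeg (blk j))
      + (if j = rep (blk j) then g (lam (blk j)) - g (bdeg (blk j)) else 0))"
    by (rule sum.cong) (auto simp: eigval_def)
  also have "\<dots> = (\<Sum>j<n. g (bdeg (blk j)))
      + (\<Sum>j\<in>{j. j < n \<and> j = rep (blk j)}. g (lam (blk j)) - g (bdeg (blk j)))"
    by (simp add: sum.distrib sum.inter_filter[symmetric] Int_def)
  also have "(\<Sum>j<n. g (bdeg (blk j))) = (\<Sum>S<m. bsize S * g (bdeg S))"
    by (rule sum_by_block)
  also have "(\<Sum>j\<in>{j. j < n \<and> j = rep (blk j)}. g (lam (blk j)) - g (bdeg (blk j)))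
      = (\<Sum>S<m. g (lam S) - g (bdeg S))"
    unfolding reps using \<open>inj_on rep {..<m}\<close> by (simp add: sum.reindex block_rep)
  finally show ?thesis by (simp add: sum.distrib[symmetric] algebra_simps)
qed

lemma count_lap_spectrum:
  "real (count (lap_spectrum G) v)
    = (\<Sum>S<m. (if lam S = v then 1 else 0) + (bsize S - 1) * (if bdeg S = v then 1 else 0))"
  unfolding count_eq_sum_mset_indicator sum_mset_lap_spectrum ..

lemma lap_energy_by_block:
  "lap_energy G = (\<Sum>S<m. \<bar>lam S - avg_degree G\<bar> + (bsize S - 1) * \<bar>bdeg S - avg_degree G\<bar>)"
  unfolding lap_energy_def sum_mset_lap_spectrum ..

end

lemma block_graph_eigenbasis_complete_graph:
  assumes "n \<ge> 1"
  shows "block_graph_eigenbasis (complete_graph n) 1 (\<lambda>_. 0) (\<lambda>_. 0) (\<lambda>_ _. True)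
    (\<lambda>_ _. 1) (\<lambda>_. 0) (\<lambda>_. real n)"
  using assms
  by unfold_locales (auto simp: complete_graph_def order_def adj_def block_size_def block_degree_def)

lemma
  assumes n: "n \<ge> 1"
  shows lap_energy_complete_graph: "lap_energy (complete_graph n) = 2 * real n - 2"
    and count_lap_spectrum_complete_graph:
      "real (count (lap_spectrum (complete_graph n)) (real n)) = real n - 1"
proof -
  interpret block_graph_eigenbasis "complete_graph n" 1 "\<lambda>_. 0" "\<lambda>_. 0" "\<lambda>_ _. True"
      "\<lambda>_ _. 1" "\<lambda>_. 0" "\<lambda>_. real n"
    by (rule block_graph_eigenbasis_complete_graph[OF n])
  have order: "order (complete_graph n) = n" by (simp add: complete_graph_def order_def)
  have size: "block_size n (\<lambda>_. 0) 0 = real n" by (simp add: block_size_def)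
  have bdeg: "block_degree n (Suc 0) (\<lambda>_. 0) (\<lambda>_ _. True) 0 = real n"
    by (simp add: block_degree_def size)
  have "avg_degree (complete_graph n) = real n - 1"
    using avg_degree_by_block n by (simp add: order size bdeg)
  then show "lap_energy (complete_graph n) = 2 * real n - 2"
    using lap_energy_by_block n by (simp add: order size bdeg)
  show "real (count (lap_spectrum (complete_graph n)) (real n)) = real n - 1"
    using count_lap_spectrum n by (simp add: order size bdeg)
qed

text \<open>The blocks of \<open>G_ir i r\<close>, in vertex order: the outer \<open>(2r+1) K1\<close>, the \<open>(2r+1-i) K1\<close>,
  the apex of \<open>K1 \<nabla> (i+1) K1\<close>, and its \<open>(i+1) K1\<close>.\<close>

definition G_block :: "nat \<Rightarrow> nat \<Rightarrow> nat \<Rightarrow> nat" where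
  "G_block r i k = (if k < 2*r+1 then 0 else if k < 4*r+2-i then 1 else if k = 4*r+2-i then 2 else 3)"

definition G_rep :: "nat \<Rightarrow> nat \<Rightarrow> nat \<Rightarrow> nat" where
  "G_rep r i S = [0, 2*r+1, 4*r+2-i, 4*r+3-i] ! S"

definition G_pattern :: "nat \<Rightarrow> nat \<Rightarrow> bool" where
  "G_pattern S T \<longleftrightarrow> (S = 0 \<and> T \<noteq> 0) \<or> (S \<noteq> 0 \<and> T = 0) \<or> (S = 2 \<and> T = 3) \<or> (S = 3 \<and> T = 2)"

definition G_block_size :: "nat \<Rightarrow> nat \<Rightarrow> nat \<Rightarrow> real" where
  "G_block_size r i S = [2*real r+1, 2*real r+1-real i, 1, real i+1] ! S"

definition G_block_degree :: "nat \<Rightarrow> nat \<Rightarrow> nat \<Rightarrow> real" where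
  "G_block_degree r i S = [2*real r+3, 2*real r+1, 2*real r+2+real i, 2*real r+2] ! S"

definition G_eigvec :: "nat \<Rightarrow> nat \<Rightarrow> nat \<Rightarrow> nat \<Rightarrow> real" where
  "G_eigvec r i R S = [[1, 1, 1, 1],
     [2*real r+3, -(2*real r+1), -(2*real r+1), -(2*real r+1)],
     [0, 0, real i+1, -1],
     [0, real i+2, -(2*real r+1-real i), -(2*real r+1-real i)]] ! R ! S"

definition G_eigval :: "nat \<Rightarrow> nat \<Rightarrow> nat \<Rightarrow> real" where
  "G_eigval r i R = [0, 4*real r+4, 2*real r+3+real i, 2*real r+1] ! R"

definition G_eigvec_sqnorm :: "nat \<Rightarrow> nat \<Rightarrow> nat \<Rightarrow> real" where
  "G_eigvec_sqnorm r i R = [4*real r+4, (2*real r+1)*(2*real r+3)*(4*real r+4), (real i+1)*(real i+2),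
     (2*real r+1-real i)*(real i+2)*(2*real r+3)] ! R"

lemma less_4_cases: "(S :: nat) < 4 \<Longrightarrow> S = 0 \<or> S = 1 \<or> S = 2 \<or> S = 3"
  by auto

lemma sum_lessThan_4: "(\<Sum>S<(4::nat). f S) = f 0 + f 1 + f 2 + f 3"
  by (simp add: eval_nat_numeral)

lemma order_G_ir: "i \<le> 2*r \<Longrightarrow> order (G_ir i r) = 4*r+4"
  by (simp add: G_ir_def gjoin_def gunion_def empty_graph_def order_def)

text \<open>Each case records the truth value of every comparison occurring in the unfolded adjacency
  of \<open>G_ir i r\<close>, so that the adjacency test below reduces by plain rewriting.\<close>

lemma G_block_cases:
  assumes i: "i \<le> 2*r" and u: "u < 4*r+4"
  defines "a \<equiv> 2*r+1" and "b \<equiv> 2*r+1-i"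
  shows "(u < a \<and> G_block r i u = 0) \<or>
    (\<not> u < a \<and> a \<le> u \<and> u - a < b \<and> \<not> b \<le> u - a \<and> G_block r i u = 1) \<or>
    (\<not> u < a \<and> a \<le> u \<and> \<not> u - a < b \<and> b \<le> u - a \<and> u - a - b < 1 \<and> \<not> 1 \<le> u - a - b
       \<and> u = 4*r+2-i \<and> G_block r i u = 2) \<or>
    (\<not> u < a \<and> a \<le> u \<and> \<not> u - a < b \<and> b \<le> u - a \<and> \<not> u - a - b < 1 \<and> 1 \<le> u - a - b
       \<and> G_block r i u = 3)"
  using i u unfolding a_def b_def G_block_def by auto

lemma adj_G_ir:
  assumes i: "i \<le> 2*r" and u: "u < 4*r+4" and v: "v < 4*r+4"
  shows "adj (G_ir i r) u v \<longleftrightarrow> u \<noteq> v \<and> G_pattern (G_block r i u) (G_block r i v)"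
proof -
  have unfold: "adj (G_ir i r) u v = (if u < 2*r+1 \<and> v < 2*r+1 then False
    else if 2*r+1 \<le> u \<and> 2*r+1 \<le> v then
      (if u - (2*r+1) < 2*r+1-i \<and> v - (2*r+1) < 2*r+1-i then False
       else if 2*r+1-i \<le> u - (2*r+1) \<and> 2*r+1-i \<le> v - (2*r+1) then
         (if u - (2*r+1) - (2*r+1-i) < 1 \<and> v - (2*r+1) - (2*r+1-i) < 1 then False
          else if 1 \<le> u - (2*r+1) - (2*r+1-i) \<and> 1 \<le> v - (2*r+1) - (2*r+1-i) then False
          else True)
       else False)
    else True)"
    by (simp add: G_ir_def gjoin_def gunion_def empty_graph_def order_def adj_def)
  show ?thesis
    using G_block_cases[OF i u] G_block_cases[OF i v] unfolding unfold
    by (elim disjE conjE) (simp_all only: if_True if_False G_pattern_def simp_thms, auto)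
qed

lemma block_size_G_ir:
  assumes i: "i \<le> 2*r" and S: "S < 4"
  shows "block_size (4*r+4) (G_block r i) S = G_block_size r i S"
proof -
  have "{k. k < 4*r+4 \<and> G_block r i k = 0} = {0..<2*r+1}"
    and "{k. k < 4*r+4 \<and> G_block r i k = 1} = {2*r+1..<4*r+2-i}"
    and "{k. k < 4*r+4 \<and> G_block r i k = 2} = {4*r+2-i}"
    and "{k. k < 4*r+4 \<and> G_block r i k = 3} = {4*r+3-i..<4*r+4}"
    using i by (auto simp: G_block_def)
  then show ?thesis
    using i less_4_cases[OF S] by (auto simp: block_size_def G_block_size_def of_nat_diff)
qed

lemma sum_block_size_G_ir:
  "i \<le> 2*r \<Longrightarrow> (\<Sum>T<4. block_size (4*r+4) (G_block r i) T * f T) = (\<Sum>T<4. G_block_size r i T * f T)"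
  by (rule sum.cong) (simp_all add: block_size_G_ir)

lemma block_degree_G_ir:
  assumes "i \<le> 2*r" and S: "S < 4"
  shows "block_degree (4*r+4) 4 (G_block r i) G_pattern S = G_block_degree r i S"
  unfolding block_degree_def sum_block_size_G_ir[OF assms(1)]
  using less_4_cases[OF S]
  by (elim disjE) (simp_all add: sum_lessThan_4 G_block_size_def G_pattern_def G_block_degree_def)

lemma block_graph_eigenbasis_G_ir:
  assumes i: "i \<le> 2*r"
  shows "block_graph_eigenbasis (G_ir i r) 4 (G_block r i) (G_rep r i) G_pattern
    (G_eigvec r i) (G_eigval r i) (G_eigvec_sqnorm r i)"
proof (unfold_locales, unfold order_G_ir[OF i])
  fix k assume "k < 4*r+4" then show "G_block r i k < 4" by (simp add: G_block_def)
next
  fix S assume "S < (4::nat)"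
  moreover have "4*r+2-i < 4*r+4" "4*r+3-i < 4*r+4" "2*r+1 < 4*r+2-i" using i by auto
  ultimately show "G_rep r i S < 4*r+4" and "G_block r i (G_rep r i S) = S"
    by (auto dest!: less_4_cases simp: G_rep_def G_block_def)
next
  fix S T :: nat show "G_pattern S T = G_pattern T S" by (auto simp: G_pattern_def)
next
  fix u v assume "u < 4*r+4" "v < 4*r+4"
  then show "adj (G_ir i r) u v \<longleftrightarrow> u \<noteq> v \<and> G_pattern (G_block r i u) (G_block r i v)"
    by (rule adj_G_ir[OF i])
next
  fix R C assume R: "R < (4::nat)" and C: "C < (4::nat)"
  show "(\<Sum>S<4. block_size (4*r+4) (G_block r i) S * (G_eigvec r i R S * G_eigvec r i C S))
      = (if R = C then G_eigvec_sqnorm r i R else 0)"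
    unfolding sum_block_size_G_ir[OF i] using less_4_cases[OF R] less_4_cases[OF C]
    by (elim disjE) (simp_all add: sum_lessThan_4 G_eigvec_def G_block_size_def G_eigvec_sqnorm_def algebra_simps)
next
  fix R assume "R < (4::nat)"
  moreover have "real i \<le> 2 * real r" using i by simp
  ultimately show "G_eigvec_sqnorm r i R \<noteq> 0"
    by (auto dest!: less_4_cases simp: G_eigvec_sqnorm_def)
next
  fix R S assume R: "R < (4::nat)" and S: "S < (4::nat)"
  show "block_degree (4*r+4) 4 (G_block r i) G_pattern S * G_eigvec r i R S
      - (\<Sum>T<4. block_size (4*r+4) (G_block r i) T * (if G_pattern S T then G_eigvec r i R T else 0))
      = G_eigval r i R * G_eigvec r i R S"
    unfolding block_degree_G_ir[OF i S] sum_block_size_G_ir[OF i]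
    using less_4_cases[OF R] less_4_cases[OF S]
    by (elim disjE) (simp_all add: sum_lessThan_4 G_eigvec_def G_block_size_def G_eigval_def
        G_pattern_def G_block_degree_def algebra_simps)
qed

lemma
  assumes i: "i \<le> 2*r"
  shows avg_degree_G_ir: "avg_degree (G_ir i r) = 2 * real r + 2 + real i / (2 * real r + 2)"
    and lap_energy_G_ir: "lap_energy (G_ir i r) = 8 * real r + 6"
    and count_lap_spectrum_G_ir_2r2: "real (count (lap_spectrum (G_ir i r)) (2 * real r + 2)) = real i"
    and count_lap_spectrum_G_ir_4r4: "real (count (lap_spectrum (G_ir i r)) (4 * real r + 4)) = 1"
proof -
  interpret block_graph_eigenbasis "G_ir i r" 4 "G_block r i" "G_rep r i" G_pattern
      "G_eigvec r i" "G_eigval r i" "G_eigvec_sqnorm r i"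
    by (rule block_graph_eigenbasis_G_ir[OF i])
  have i_le: "real i \<le> 2 * real r" using i by simp
  note blocks = order_G_ir[OF i] block_size_G_ir[OF i] block_degree_G_ir[OF i] sum_lessThan_4
  have "avg_degree (G_ir i r) = (\<Sum>S<4. G_block_size r i S * G_block_degree r i S) / (4 * real r + 4)"
    unfolding avg_degree_by_block by (simp add: blocks G_pattern_def)
  also have "\<dots> = 2 * real r + 2 + real i / (2 * real r + 2)"
    by (simp add: sum_lessThan_4 G_block_size_def G_block_degree_def field_simps)
  finally show avg: "avg_degree (G_ir i r) = 2 * real r + 2 + real i / (2 * real r + 2)" .
  define t where "t = real i / (2 * real r + 2)"
  have "0 \<le> t" "t < 1" "t \<le> real i" using i_le by (auto simp: t_def field_simps)
  have "lap_energy (G_ir i r) = (\<Sum>S<4. \<bar>G_eigval r i S - (2 * real r + 2 + t)\<bar>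
      + (G_block_size r i S - 1) * \<bar>G_block_degree r i S - (2 * real r + 2 + t)\<bar>)"
    unfolding lap_energy_by_block avg t_def[symmetric] by (simp add: blocks)
  also have "\<dots> = 8 * real r + 6"
    using \<open>0 \<le> t\<close> \<open>t < 1\<close> \<open>t \<le> real i\<close> i_le
    by (simp add: sum_lessThan_4 G_eigval_def G_block_size_def G_block_degree_def algebra_simps abs_if)
  finally show "lap_energy (G_ir i r) = 8 * real r + 6" .
  show "real (count (lap_spectrum (G_ir i r)) (2 * real r + 2)) = real i"
    unfolding count_lap_spectrum
    by (simp add: blocks G_eigval_def G_block_size_def G_block_degree_def)
  show "real (count (lap_spectrum (G_ir i r)) (4 * real r + 4)) = 1"
    unfolding count_lap_spectrum using i_le
    by (simp add: blocks G_eigval_def G_block_size_def G_block_degree_def)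
qed

theorem theorem6:
  fixes r :: nat
  assumes "r \<ge> 1"
  shows "(\<forall>i \<le> 2*r. order (G_ir i r) = 4*r+4
            \<and> lap_energy (G_ir i r) = lap_energy (complete_graph (4*r+4))
            \<and> lap_energy (complete_graph (4*r+4)) = 8*real r+6
            \<and> L_borderenergetic (G_ir i r))
       \<and> (\<forall>i \<le> 2*r. \<forall>j \<le> 2*r. i \<noteq> j \<longrightarrow> lap_spectrum (G_ir i r) \<noteq> lap_spectrum (G_ir j r))
       \<and> (\<forall>i \<le> 2*r. lap_spectrum (G_ir i r) \<noteq> lap_spectrum (complete_graph (4*r+4)))"
proof (intro conjI allI impI)
  have K_energy: "lap_energy (complete_graph (4*r+4)) = 8*real r+6"
    using lap_energy_complete_graph[of "4*r+4"] by simp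
  fix i assume i: "i \<le> 2*r"
  show "order (G_ir i r) = 4*r+4" by (rule order_G_ir[OF i])
  show "lap_energy (G_ir i r) = lap_energy (complete_graph (4*r+4))"
    and "lap_energy (complete_graph (4*r+4)) = 8*real r+6"
    and "L_borderenergetic (G_ir i r)"
    using lap_energy_G_ir[OF i] K_energy by (simp_all add: L_borderenergetic_def order_G_ir[OF i])
  have "real (count (lap_spectrum (complete_graph (4*r+4))) (4 * real r + 4)) = 4 * real r + 3"
    using count_lap_spectrum_complete_graph[of "4*r+4"] by simp
  then show "lap_spectrum (G_ir i r) \<noteq> lap_spectrum (complete_graph (4*r+4))"
    using count_lap_spectrum_G_ir_4r4[OF i] by auto
next
  fix i j assume "i \<le> 2*r" "j \<le> 2*r" "i \<noteq> j"
  then show "lap_spectrum (G_ir i r) \<noteq> lap_spectrum (G_ir j r)"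
    using count_lap_spectrum_G_ir_2r2 by (metis of_nat_eq_iff)
qed

end
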